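(* For every pair of positive integers $\ell,k$ with $1\leq \ell<k$, $$\sum_{r=1}^k r!\,{k\brace r}=\sum_{p=1}^{\ell}\sum_{q=1}^{k-\ell}{\ell\brace p}{k-\ell\brace q}\,p!\,q!\,D(p,q).$$
   Context: ${k\brace r}$ denotes the Stirling number of the second kind (number of partitions of a $k$-element set into $r$ nonempty blocks). $D(m,n)$ is the Delannoy number, defined for nonnegative integers $m,n$ by $D(m,n)=1$ if $mn=0$, and $D(m,n)=D(m-1,n)+D(m-1,n-1)+D(m,n-1)$ if $mn\neq0$. *)

theory Defs
  imports "HOL-Combinatorics.Stirling"
begin

fun Delannoy :: "nat \<Rightarrow> nat \<Rightarrow> nat" where
  "Delannoy 0 n = 1"
| "Delannoy (Suc m) 0 = 1"
| "Delannoy (Suc m) (Suc n) = Delannoy m (Suc n) + Delannoy m n + Delannoy (Suc m) n"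

end

theory Submission
  imports Defs
begin

text \<open>
  The number \<open>r! S(n,r)\<close> counts ordered set partitions of an \<open>n\<close>-set into \<open>r\<close> blocks.
  Split the ground set into parts of sizes \<open>a\<close> and \<open>b\<close>: an ordered partition of the
  whole set restricts to ordered partitions of the two parts with \<open>p\<close> and \<open>q\<close> blocks,
  and each of its \<open>r\<close> blocks is a block of the first part, of the second part, or the
  union of one of each.  Reading the blocks in order gives an \<open>r\<close>-step lattice walk
  from \<open>(0,0)\<close> to \<open>(p,q)\<close> with steps \<open>(1,0)\<close>, \<open>(0,1)\<close>, \<open>(1,1)\<close>, and summing these
  walks over all \<open>r\<close> gives \<open>D(p,q)\<close>.  Instead of the bijection, the resulting
  convolution identity is proved by induction on \<open>b\<close>, matching the recurrence
  \<open>r! S(n+1,r) = r (r! S(n,r) + (r-1)! S(n,r-1))\<close> against a recurrence of the walk counts.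
\<close>

text \<open>Number of \<open>r\<close>-step walks from \<open>(0,0)\<close> to \<open>(p,q)\<close> with steps \<open>(1,0)\<close>, \<open>(0,1)\<close>,
  \<open>(1,1)\<close>; integer coordinates let the recursion run into negative targets, where it is 0.\<close>
fun delannoy_walks :: "int \<Rightarrow> int \<Rightarrow> nat \<Rightarrow> nat" where
  "delannoy_walks p q 0 = (if p = 0 \<and> q = 0 then 1 else 0)"
| "delannoy_walks p q (Suc r) =
     delannoy_walks (p - 1) q r + delannoy_walks p (q - 1) r + delannoy_walks (p - 1) (q - 1) r"

lemma delannoy_walks_neg: "p < 0 \<or> q < 0 \<Longrightarrow> delannoy_walks p q r = 0"
  by (induction r arbitrary: p q) auto

lemma delannoy_walks_right_0: "delannoy_walks p 0 r = (if p = int r then 1 else 0)"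
  by (induction r arbitrary: p) (auto simp: delannoy_walks_neg)

lemma delannoy_walks_left_0: "delannoy_walks 0 q r = (if q = int r then 1 else 0)"
  by (induction r arbitrary: q) (auto simp: delannoy_walks_neg)

lemma sum_delannoy_walks_Suc:
  "(\<Sum>r\<le>Suc N. delannoy_walks p q r) = delannoy_walks p q 0 +
     (\<Sum>r\<le>N. delannoy_walks (p - 1) q r) + (\<Sum>r\<le>N. delannoy_walks p (q - 1) r) +
     (\<Sum>r\<le>N. delannoy_walks (p - 1) (q - 1) r)"
  by (simp add: sum.atMost_Suc_shift sum.distrib del: sum.atMost_Suc)

lemma sum_delannoy_walks:
  "p + q \<le> N \<Longrightarrow> (\<Sum>r\<le>N. delannoy_walks (int p) (int q) r) = Delannoy p q"
proof (induction p q arbitrary: N rule: Delannoy.induct)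
  case (1 q)
  then show ?case by (simp add: delannoy_walks_left_0)
next
  case (2 p)
  then show ?case by (simp add: delannoy_walks_right_0 del: of_nat_Suc)
next
  case (3 p q)
  then obtain M where "N = Suc M" "Suc p + q \<le> M" by (cases N) auto
  with 3 show ?case by (simp add: sum_delannoy_walks_Suc del: sum.atMost_Suc)
qed

text \<open>At \<open>r = 0\<close> the truncated \<open>r - 1\<close> is harmless because of the factor \<open>r\<close>.\<close>
lemma delannoy_walks_recurrence_int:
  "q * int (delannoy_walks p q r) + (q + 1) * int (delannoy_walks p (q + 1) r) =
   int r * (int (delannoy_walks p q r) + int (delannoy_walks p q (r - 1)))"
proof (induction r arbitrary: p q)
  case 0
  then show ?case by simp
next
  case (Suc r)
  have "int r * (int (delannoy_walks (p - 1) q (r - 1)) + int (delannoy_walks p (q - 1) (r - 1))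
             + int (delannoy_walks (p - 1) (q - 1) (r - 1))) = int r * int (delannoy_walks p q r)"
    by (cases r) simp_all
  then show ?case
    using Suc.IH[where p = "p - 1" and q = q] Suc.IH[where p = p and q = "q - 1"]
      Suc.IH[where p = "p - 1" and q = "q - 1"]
    by (simp add: algebra_simps)
qed

lemma delannoy_walks_recurrence:
  "q * delannoy_walks p (int q) r + Suc q * delannoy_walks p (int (Suc q)) r =
   r * (delannoy_walks p (int q) r + delannoy_walks p (int q) (r - 1))"
proof -
  have "int (q * delannoy_walks p (int q) r + Suc q * delannoy_walks p (int (Suc q)) r) =
        int (r * (delannoy_walks p (int q) r + delannoy_walks p (int q) (r - 1)))"
    using delannoy_walks_recurrence_int[of "int q" p r] by (simp add: algebra_simps)
  then show ?thesis by (simp only: of_nat_eq_iff)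
qed

definition ordered_partitions :: "nat \<Rightarrow> nat \<Rightarrow> nat" where
  "ordered_partitions n r = fact r * Stirling n r"

lemma ordered_partitions_Suc:
  "ordered_partitions (Suc n) r = r * (ordered_partitions n r + ordered_partitions n (r - 1))"
  by (cases r) (simp_all add: ordered_partitions_def algebra_simps)

lemma ordered_partitions_eq_0: "n < r \<Longrightarrow> ordered_partitions n r = 0"
  by (simp add: ordered_partitions_def)

lemma ordered_partitions_0_right: "0 < n \<Longrightarrow> ordered_partitions n 0 = 0"
  by (cases n) (simp_all add: ordered_partitions_def)

lemma ordered_partitions_0_left: "ordered_partitions 0 r = (if r = 0 then 1 else 0)"
  by (cases r) (simp_all add: ordered_partitions_def)

lemma sum_ordered_partitions_Suc:
  "(\<Sum>q\<le>Suc b. ordered_partitions (Suc b) q * g q) =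
   (\<Sum>q\<le>b. ordered_partitions b q * (q * g q + Suc q * g (Suc q)))"
proof -
  have "(\<Sum>q\<le>Suc b. ordered_partitions (Suc b) q * g q) =
        (\<Sum>q\<le>Suc b. q * ordered_partitions b q * g q) +
        (\<Sum>q\<le>Suc b. q * ordered_partitions b (q - 1) * g q)"
    by (simp add: ordered_partitions_Suc sum.distrib algebra_simps del: sum.atMost_Suc)
  also have "(\<Sum>q\<le>Suc b. q * ordered_partitions b q * g q) =
        (\<Sum>q\<le>b. q * ordered_partitions b q * g q)"
    by (simp add: ordered_partitions_eq_0)
  also have "(\<Sum>q\<le>Suc b. q * ordered_partitions b (q - 1) * g q) =
        (\<Sum>q\<le>b. Suc q * ordered_partitions b q * g (Suc q))"
    by (simp add: sum.atMost_Suc_shift del: sum.atMost_Suc)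
  finally show ?thesis
    by (simp add: sum.distrib algebra_simps)
qed

lemma ordered_partitions_add:
  "ordered_partitions (a + b) r =
   (\<Sum>p\<le>a. \<Sum>q\<le>b. ordered_partitions a p * ordered_partitions b q * delannoy_walks (int p) (int q) r)"
proof (induction b arbitrary: r)
  case 0
  then show ?case
    by (simp add: ordered_partitions_0_left delannoy_walks_right_0 ordered_partitions_eq_0
        if_distrib[of "(*) _"] cong: if_cong)
next
  case (Suc b)
  have "ordered_partitions (a + Suc b) r =
        r * (ordered_partitions (a + b) r + ordered_partitions (a + b) (r - 1))"
    by (simp add: ordered_partitions_Suc)
  also have "\<dots> = (\<Sum>p\<le>a. \<Sum>q\<le>b. ordered_partitions a p * ordered_partitions b q *
      (r * (delannoy_walks (int p) (int q) r + delannoy_walks (int p) (int q) (r - 1))))"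
    by (simp add: Suc.IH sum_distrib_left sum.distrib algebra_simps)
  also have "\<dots> = (\<Sum>p\<le>a. \<Sum>q\<le>b. ordered_partitions a p * ordered_partitions b q *
      (q * delannoy_walks (int p) (int q) r + Suc q * delannoy_walks (int p) (int (Suc q)) r))"
    by (simp only: delannoy_walks_recurrence)
  also have "\<dots> = (\<Sum>p\<le>a. \<Sum>q\<le>Suc b. ordered_partitions a p * ordered_partitions (Suc b) q *
      delannoy_walks (int p) (int q) r)"
    by (simp only: mult.assoc sum_ordered_partitions_Suc flip: sum_distrib_left)
  finally show ?case .
qed

lemma sum_ordered_partitions_add:
  "(\<Sum>r\<le>a + b. ordered_partitions (a + b) r) =
   (\<Sum>p\<le>a. \<Sum>q\<le>b. ordered_partitions a p * ordered_partitions b q * Delannoy p q)"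
proof -
  have "(\<Sum>r\<le>a + b. ordered_partitions (a + b) r) =
        (\<Sum>p\<le>a. \<Sum>q\<le>b. ordered_partitions a p * ordered_partitions b q *
           (\<Sum>r\<le>a + b. delannoy_walks (int p) (int q) r))"
    by (simp add: ordered_partitions_add sum_distrib_left sum.swap[of _ "{..a + b}"])
  also have "\<dots> = (\<Sum>p\<le>a. \<Sum>q\<le>b. ordered_partitions a p * ordered_partitions b q * Delannoy p q)"
    by (intro sum.cong refl) (simp add: sum_delannoy_walks)
  finally show ?thesis .
qed

theorem theorem2:
  fixes l k :: nat
  assumes "1 \<le> l" and "l < k"
  shows "(\<Sum>r=1..k. fact r * Stirling k r) =
    (\<Sum>p=1..l. \<Sum>q=1..k-l. Stirling l p * Stirling (k-l) q * fact p * fact q * Delannoy p q)"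
proof -
  define b where "b = k - l"
  have k: "k = l + b" and "0 < l" "0 < b"
    using assms by (simp_all add: b_def)
  have drop_0: "sum f {..n} = sum f {1..n}" if "f 0 = 0" for f :: "nat \<Rightarrow> nat" and n
    using that by (simp add: atMost_atLeast0 sum.atLeast_Suc_atMost)
  have "(\<Sum>r=1..k. fact r * Stirling k r) = (\<Sum>r\<le>l + b. ordered_partitions (l + b) r)"
    using ordered_partitions_0_right[of k] \<open>0 < l\<close>
    by (subst drop_0) (simp_all add: k ordered_partitions_def)
  also have "\<dots> = (\<Sum>p\<le>l. \<Sum>q\<le>b. ordered_partitions l p * ordered_partitions b q * Delannoy p q)"
    by (rule sum_ordered_partitions_add)
  also have "\<dots> = (\<Sum>p=1..l. \<Sum>q=1..b. ordered_partitions l p * ordered_partitions b q * Delannoy p q)"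
    using \<open>0 < l\<close> \<open>0 < b\<close> by (simp add: drop_0 ordered_partitions_0_right)
  finally show ?thesis
    by (simp add: b_def ordered_partitions_def mult_ac)
qed

end
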